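(* Let $|\Psi\rangle$ be a normalized state of the periodic chain which is simultaneously an eigenvector of $H$ and of the one-site translation operator $U$. Fix indices $\alpha\neq\beta$ and define $$C(x)=\langle\Psi|\,J_\alpha(x)\,q_\beta(0)-q_\alpha(x)\,J_\beta(1)\,|\Psi\rangle .$$ Then $C(x)$ is independent of $x$, i.e. $C(x+1)=C(x)$ for all $x$.
   Context: Consider a spin chain of length $L$ with periodic boundary conditions, Hilbert space $(\mathbb{C}^N)^{\otimes L}$, sites labelled by $x\in\mathbb{Z}$ modulo $L$. Let $U$ be the unitary one-site translation operator. A local operator family $\mathcal{O}(x)$ is called translation covariant if $\mathcal{O}(x+1)=U\mathcal{O}(x)U^{-1}$. The chain has a Hamiltonian $H=\sum_{x=1}^L h(x)$ with $h(x)$ local and translation covariant, and a family of mutually commuting conserved charges $Q_\alpha=\sum_{x=1}^L q_\alpha(x)$, with $q_\alpha(x)$ translation covariant local operators (charge densities), $[Q_\alpha,Q_\beta]=0$, $[H,Q_\alpha]=0$, $[U,Q_\alpha]=[U,H]=0$. The current operators $J_\alpha(x)$ are translation covariant local operators defined by the continuity equation $$ i\,[H,q_\alpha(x)]=J_\alpha(x)-J_\alpha(x+1)\quad\text{for all }x.$$ *)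

theory Defs
  imports Complex_Main
begin

text \<open>Periodic spin chain of length L with local dimension N.
  A basis configuration is a function s :: nat => nat with s i < N for i < L
  (site i carries the basis state s i of C^N) and s i = 0 for i >= L.
  The Hilbert space (C^N)^{tensor L} is the space of functions configs N L -> complex;
  operators are matrices indexed by configurations.  Values outside configs N L are
  irrelevant: all equalities between operators/vectors are taken on configs N L.\<close>

type_synonym config = "nat \<Rightarrow> nat"
type_synonym cvec = "config \<Rightarrow> complex"
type_synonym cop = "config \<Rightarrow> config \<Rightarrow> complex"

definition configs :: "nat \<Rightarrow> nat \<Rightarrow> config set" where
  "configs N L = {s. (\<forall>i<L. s i < N) \<and> (\<forall>i\<ge>L. s i = 0)}"

definition op_mult :: "nat \<Rightarrow> nat \<Rightarrow> cop \<Rightarrow> cop \<Rightarrow> cop" where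
  "op_mult N L A B = (\<lambda>s t. \<Sum>u\<in>configs N L. A s u * B u t)"

definition op_add :: "cop \<Rightarrow> cop \<Rightarrow> cop" where
  "op_add A B = (\<lambda>s t. A s t + B s t)"

definition op_diff :: "cop \<Rightarrow> cop \<Rightarrow> cop" where
  "op_diff A B = (\<lambda>s t. A s t - B s t)"

definition op_scale :: "complex \<Rightarrow> cop \<Rightarrow> cop" where
  "op_scale c A = (\<lambda>s t. c * A s t)"

definition op_adj :: "cop \<Rightarrow> cop" where
  "op_adj A = (\<lambda>s t. cnj (A t s))"

definition op_id :: cop where
  "op_id = (\<lambda>s t. if s = t then 1 else 0)"

definition op_sum :: "nat \<Rightarrow> (int \<Rightarrow> cop) \<Rightarrow> cop" where
  "op_sum L f = (\<lambda>s t. \<Sum>x\<in>{0..<int L}. f x s t)"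

definition op_eq :: "nat \<Rightarrow> nat \<Rightarrow> cop \<Rightarrow> cop \<Rightarrow> bool" where
  "op_eq N L A B \<longleftrightarrow> (\<forall>s\<in>configs N L. \<forall>t\<in>configs N L. A s t = B s t)"

definition commutator :: "nat \<Rightarrow> nat \<Rightarrow> cop \<Rightarrow> cop \<Rightarrow> cop" where
  "commutator N L A B = op_diff (op_mult N L A B) (op_mult N L B A)"

definition hermitian :: "nat \<Rightarrow> nat \<Rightarrow> cop \<Rightarrow> bool" where
  "hermitian N L A \<longleftrightarrow> op_eq N L A (op_adj A)"

definition op_apply :: "nat \<Rightarrow> nat \<Rightarrow> cop \<Rightarrow> cvec \<Rightarrow> cvec" where
  "op_apply N L A v = (\<lambda>s. \<Sum>t\<in>configs N L. A s t * v t)"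

definition inner :: "nat \<Rightarrow> nat \<Rightarrow> cvec \<Rightarrow> cvec \<Rightarrow> complex" where
  "inner N L v w = (\<Sum>s\<in>configs N L. cnj (v s) * w s)"

definition vec_eq :: "nat \<Rightarrow> nat \<Rightarrow> cvec \<Rightarrow> cvec \<Rightarrow> bool" where
  "vec_eq N L v w \<longleftrightarrow> (\<forall>s\<in>configs N L. v s = w s)"

definition expval :: "nat \<Rightarrow> nat \<Rightarrow> cvec \<Rightarrow> cop \<Rightarrow> complex" where
  "expval N L \<Psi> A = inner N L \<Psi> (op_apply N L A \<Psi>)"

text \<open>One-site translation: the content of site i is moved to site i+1 (mod L),
  i.e. U |s> = |rot s> with (rot s)(i) = s(i-1 mod L).\<close>
definition rot :: "nat \<Rightarrow> config \<Rightarrow> config" where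
  "rot L t = (\<lambda>i. if i < L then t ((i + L - 1) mod L) else 0)"

definition transl :: "nat \<Rightarrow> cop" where
  "transl L = (\<lambda>s t. if s = rot L t then 1 else 0)"

definition acts_on :: "nat \<Rightarrow> nat \<Rightarrow> nat set \<Rightarrow> cop \<Rightarrow> bool" where
  "acts_on N L S A \<longleftrightarrow>
     (\<forall>s\<in>configs N L. \<forall>t\<in>configs N L.
        (\<exists>i<L. i \<notin> S \<and> s i \<noteq> t i) \<longrightarrow> A s t = 0) \<and>
     (\<forall>s\<in>configs N L. \<forall>t\<in>configs N L. \<forall>s'\<in>configs N L. \<forall>t'\<in>configs N L.
        (\<forall>i<L. i \<notin> S \<longrightarrow> s i = t i \<and> s' i = t' i) \<and>
        (\<forall>i\<in>S. s i = s' i \<and> t i = t' i) \<longrightarrow> A s t = A s' t')"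

definition local_op :: "nat \<Rightarrow> nat \<Rightarrow> cop \<Rightarrow> bool" where
  "local_op N L A \<longleftrightarrow> (\<exists>S. S \<subseteq> {..<L} \<and> acts_on N L S A)"

text \<open>Translation covariant local operator family O(x), x in Z (sites mod L):
  O(x+1) = U O(x) U^{-1}, where U^{-1} = U^dagger (U is a permutation matrix).\<close>
definition transl_cov :: "nat \<Rightarrow> nat \<Rightarrow> (int \<Rightarrow> cop) \<Rightarrow> bool" where
  "transl_cov N L F \<longleftrightarrow>
     (\<forall>x. op_eq N L (F (x + 1)) (op_mult N L (op_mult N L (transl L) (F x)) (op_adj (transl L))))"

definition local_cov_family :: "nat \<Rightarrow> nat \<Rightarrow> (int \<Rightarrow> cop) \<Rightarrow> bool" where
  "local_cov_family N L F \<longleftrightarrow> (\<forall>x. local_op N L (F x)) \<and> transl_cov N L F"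

end

theory Submission imports Defs "HOL-Library.FuncSet" begin

text \<open>Write \<open>a = q\<^sub>\<alpha>(x)\<close> and \<open>b = q\<^sub>\<beta>(0)\<close>. By the continuity equation
  \<open>\<langle>J\<^sub>\<alpha>(x+1) b\<rangle> - \<langle>J\<^sub>\<alpha>(x) b\<rangle> = -i\<langle>[H,a] b\<rangle>\<close>, while translation invariance of \<open>\<Psi>\<close> gives
  \<open>\<langle>q\<^sub>\<alpha>(x+1) J\<^sub>\<beta>(1)\<rangle> = \<langle>a J\<^sub>\<beta>(0)\<rangle>\<close>, and again by continuity
  \<open>\<langle>a J\<^sub>\<beta>(0)\<rangle> - \<langle>a J\<^sub>\<beta>(1)\<rangle> = i\<langle>a [H,b]\<rangle>\<close>. Hence \<open>C(x+1) - C(x) = -i\<langle>[H, a b]\<rangle>\<close>,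
  which vanishes because \<open>\<Psi>\<close> is an eigenvector of the hermitian \<open>H\<close>.
  Only continuity, hermiticity, translation covariance and the eigenvector property enter.\<close>

lemma finite_configs: "finite (configs N L)"
proof -
  have "configs N L \<subseteq> (\<lambda>f i. if i < L then f i else 0) ` (PiE {..<L} (\<lambda>_. {..<N}))"
  proof
    fix s assume s: "s \<in> configs N L"
    have "s = (\<lambda>i. if i < L then restrict s {..<L} i else 0)"
      using s by (auto simp: configs_def fun_eq_iff)
    moreover have "restrict s {..<L} \<in> PiE {..<L} (\<lambda>_. {..<N})"
      using s by (auto simp: configs_def)
    ultimately show "s \<in> (\<lambda>f i. if i < L then f i else 0) ` (PiE {..<L} (\<lambda>_. {..<N}))"
      by blast
  qed
  then show ?thesis by (rule finite_subset) (auto intro: finite_PiE)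
qed

lemma op_apply_op_mult: "op_apply N L (op_mult N L A B) v = op_apply N L A (op_apply N L B v)"
proof
  fix s
  have "op_apply N L (op_mult N L A B) v s
      = (\<Sum>t\<in>configs N L. \<Sum>u\<in>configs N L. A s u * (B u t * v t))"
    unfolding op_apply_def op_mult_def by (simp add: sum_distrib_right mult.assoc)
  also have "\<dots> = (\<Sum>u\<in>configs N L. \<Sum>t\<in>configs N L. A s u * (B u t * v t))"
    by (rule sum.swap)
  also have "\<dots> = op_apply N L A (op_apply N L B v) s"
    unfolding op_apply_def by (simp add: sum_distrib_left)
  finally show "op_apply N L (op_mult N L A B) v s = op_apply N L A (op_apply N L B v) s" .
qed

lemma inner_op_apply_adj: "inner N L v (op_apply N L A w) = inner N L (op_apply N L (op_adj A) v) w"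
proof -
  have "inner N L v (op_apply N L A w)
      = (\<Sum>s\<in>configs N L. \<Sum>t\<in>configs N L. cnj (v s) * (A s t * w t))"
    unfolding inner_def op_apply_def by (simp add: sum_distrib_left)
  also have "\<dots> = (\<Sum>t\<in>configs N L. \<Sum>s\<in>configs N L. cnj (v s) * (A s t * w t))"
    by (rule sum.swap)
  also have "\<dots> = inner N L (op_apply N L (op_adj A) v) w"
    unfolding inner_def op_apply_def op_adj_def
    by (simp add: sum_distrib_right sum_distrib_left mult_ac)
  finally show ?thesis .
qed

lemma op_apply_op_eq:
  "op_eq N L A B \<Longrightarrow> s \<in> configs N L \<Longrightarrow> op_apply N L A v s = op_apply N L B v s"
  unfolding op_eq_def op_apply_def by auto

lemma op_apply_vec_eq: "vec_eq N L v w \<Longrightarrow> op_apply N L A v = op_apply N L A w"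
  unfolding vec_eq_def op_apply_def by (auto intro!: sum.cong)

lemma inner_vec_eq: "vec_eq N L v v' \<Longrightarrow> vec_eq N L w w' \<Longrightarrow> inner N L v w = inner N L v' w'"
  unfolding vec_eq_def inner_def by (auto intro!: sum.cong)

lemma vec_eq_refl [simp]: "vec_eq N L v v"
  unfolding vec_eq_def by simp

lemma op_apply_op_diff:
  "op_apply N L (op_diff A B) v = (\<lambda>s. op_apply N L A v s - op_apply N L B v s)"
  unfolding op_apply_def op_diff_def by (auto simp: algebra_simps sum_subtractf)

lemma op_apply_op_scale: "op_apply N L (op_scale c A) v = (\<lambda>s. c * op_apply N L A v s)"
  unfolding op_apply_def op_scale_def by (auto simp: algebra_simps sum_distrib_left)

lemma op_apply_cmult: "op_apply N L A (\<lambda>s. c * v s) = (\<lambda>s. c * op_apply N L A v s)"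
  unfolding op_apply_def by (auto simp: algebra_simps sum_distrib_left)

lemma op_apply_diff: "op_apply N L A (\<lambda>s. v s - w s) = (\<lambda>s. op_apply N L A v s - op_apply N L A w s)"
  unfolding op_apply_def by (auto simp: algebra_simps sum_subtractf)

lemma op_apply_add: "op_apply N L A (\<lambda>s. v s + w s) = (\<lambda>s. op_apply N L A v s + op_apply N L A w s)"
  unfolding op_apply_def by (auto simp: algebra_simps sum.distrib)

lemma inner_scale_right: "inner N L v (\<lambda>s. c * w s) = c * inner N L v w"
  unfolding inner_def by (auto simp: algebra_simps sum_distrib_left)

lemma inner_scale_left: "inner N L (\<lambda>s. c * v s) w = cnj c * inner N L v w"
  unfolding inner_def by (auto simp: algebra_simps sum_distrib_left)

lemma inner_diff_right: "inner N L v (\<lambda>s. w s - w' s) = inner N L v w - inner N L v w'"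
  unfolding inner_def by (auto simp: algebra_simps sum_subtractf)

lemma inner_add_right: "inner N L v (\<lambda>s. w s + w' s) = inner N L v w + inner N L v w'"
  unfolding inner_def by (auto simp: algebra_simps sum.distrib)

lemma op_apply_op_id: "s \<in> configs N L \<Longrightarrow> op_apply N L op_id v s = v s"
proof -
  assume s: "s \<in> configs N L"
  have "op_apply N L op_id v s = (\<Sum>t\<in>configs N L. if s = t then v t else 0)"
    unfolding op_apply_def op_id_def by (rule sum.cong) auto
  also have "\<dots> = v s" using finite_configs[of N L] s by simp
  finally show ?thesis .
qed

definition corr :: "nat \<Rightarrow> nat \<Rightarrow> cvec \<Rightarrow> cop \<Rightarrow> cop \<Rightarrow> complex" where
  "corr N L \<Psi> A B = inner N L \<Psi> (op_apply N L A (op_apply N L B \<Psi>))"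

lemma expval_op_diff_op_mult:
  "expval N L \<Psi> (op_diff (op_mult N L A B) (op_mult N L C D)) = corr N L \<Psi> A B - corr N L \<Psi> C D"
  unfolding expval_def corr_def op_apply_op_diff op_apply_op_mult inner_diff_right ..


definition isometry :: "nat \<Rightarrow> nat \<Rightarrow> cop \<Rightarrow> bool" where
  "isometry N L U \<longleftrightarrow> op_eq N L (op_mult N L (op_adj U) U) op_id"

lemma isometry_apply_adj_apply:
  "isometry N L U \<Longrightarrow> vec_eq N L (op_apply N L (op_adj U) (op_apply N L U w)) w"
  unfolding isometry_def vec_eq_def
  by (metis op_apply_op_eq op_apply_op_id op_apply_op_mult)

lemma isometry_eigenvalue_norm:
  assumes U: "isometry N L U" and eig: "vec_eq N L (op_apply N L U \<Psi>) (\<lambda>s. \<mu> * \<Psi> s)"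
    and norm: "inner N L \<Psi> \<Psi> = 1"
  shows "cnj \<mu> * \<mu> = 1"
proof -
  have "1 = inner N L \<Psi> (op_apply N L (op_adj U) (op_apply N L U \<Psi>))"
    using inner_vec_eq[OF vec_eq_refl isometry_apply_adj_apply[OF U]] norm by simp
  also have "\<dots> = inner N L (op_apply N L U \<Psi>) (op_apply N L U \<Psi>)"
    by (simp add: inner_op_apply_adj op_adj_def)
  also have "\<dots> = inner N L (\<lambda>s. \<mu> * \<Psi> s) (\<lambda>s. \<mu> * \<Psi> s)"
    by (rule inner_vec_eq[OF eig eig])
  also have "\<dots> = cnj \<mu> * \<mu>"
    using norm by (simp add: inner_scale_left inner_scale_right)
  finally show ?thesis by simp
qed

lemma isometry_adj_eigvec:
  assumes U: "isometry N L U" and eig: "vec_eq N L (op_apply N L U \<Psi>) (\<lambda>s. \<mu> * \<Psi> s)"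
    and norm: "inner N L \<Psi> \<Psi> = 1"
  shows "vec_eq N L (op_apply N L (op_adj U) \<Psi>) (\<lambda>s. cnj \<mu> * \<Psi> s)"
proof -
  have \<mu>: "cnj \<mu> * \<mu> = 1" by (rule isometry_eigenvalue_norm[OF U eig norm])
  have "op_apply N L (op_adj U) (op_apply N L U \<Psi>) = (\<lambda>s. \<mu> * op_apply N L (op_adj U) \<Psi> s)"
    using op_apply_vec_eq[OF eig] op_apply_cmult by metis
  then have "\<Psi> s = \<mu> * op_apply N L (op_adj U) \<Psi> s" if "s \<in> configs N L" for s
    using isometry_apply_adj_apply[OF U, of \<Psi>] that by (simp add: vec_eq_def)
  then show ?thesis
    unfolding vec_eq_def by (simp add: \<mu> mult.assoc[symmetric])
qed

lemma corr_isometry_conj: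
  assumes U: "isometry N L U" and eig: "vec_eq N L (op_apply N L U \<Psi>) (\<lambda>s. \<mu> * \<Psi> s)"
    and norm: "inner N L \<Psi> \<Psi> = 1"
    and A': "op_eq N L A' (op_mult N L (op_mult N L U A) (op_adj U))"
    and B': "op_eq N L B' (op_mult N L (op_mult N L U B) (op_adj U))"
  shows "corr N L \<Psi> A' B' = corr N L \<Psi> A B"
proof -
  have adj: "vec_eq N L (op_apply N L (op_adj U) \<Psi>) (\<lambda>s. cnj \<mu> * \<Psi> s)"
    by (rule isometry_adj_eigvec[OF U eig norm])
  define z where "z = op_apply N L A (op_apply N L B \<Psi>)"
  have "vec_eq N L (op_apply N L B' \<Psi>) (\<lambda>s. cnj \<mu> * op_apply N L U (op_apply N L B \<Psi>) s)"
    using op_apply_op_eq[OF B']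
    by (simp add: vec_eq_def op_apply_op_mult op_apply_vec_eq[OF adj] op_apply_cmult)
  then have "op_apply N L A' (op_apply N L B' \<Psi>)
      = op_apply N L A' (\<lambda>s. cnj \<mu> * op_apply N L U (op_apply N L B \<Psi>) s)"
    by (rule op_apply_vec_eq)
  moreover have "vec_eq N L (op_apply N L A' (\<lambda>s. cnj \<mu> * op_apply N L U (op_apply N L B \<Psi>) s))
      (\<lambda>s. cnj \<mu> * op_apply N L U z s)"
    using op_apply_op_eq[OF A']
    by (simp add: vec_eq_def op_apply_op_mult op_apply_cmult z_def
        op_apply_vec_eq[OF isometry_apply_adj_apply[OF U]])
  ultimately have "corr N L \<Psi> A' B' = inner N L \<Psi> (\<lambda>s. cnj \<mu> * op_apply N L U z s)"
    unfolding corr_def by (metis inner_vec_eq vec_eq_refl)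
  also have "\<dots> = cnj \<mu> * inner N L (\<lambda>s. cnj \<mu> * \<Psi> s) z"
    by (simp add: inner_scale_right inner_op_apply_adj inner_vec_eq[OF adj])
  also have "\<dots> = corr N L \<Psi> A B"
    using isometry_eigenvalue_norm[OF U eig norm]
    by (simp add: inner_scale_left z_def corr_def mult.assoc[symmetric] mult.commute)
  finally show ?thesis .
qed


lemma rot_configs: "t \<in> configs N L \<Longrightarrow> rot L t \<in> configs N L"
  unfolding configs_def rot_def by auto

lemma rot_inj_on_configs:
  assumes "s \<in> configs N L" "t \<in> configs N L" "rot L s = rot L t"
  shows "s = t"
proof
  fix j
  show "s j = t j"
  proof (cases "j < L")
    case True
    define i where "i = (j + 1) mod L"
    have "i < L" using True by (simp add: i_def)
    moreover have "(i + L - 1) mod L = j"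
      using True by (cases "j + 1 = L") (auto simp: i_def)
    ultimately show ?thesis using fun_cong[OF assms(3), of i] by (simp add: rot_def)
  next
    case False
    then show ?thesis using assms(1,2) by (simp add: configs_def)
  qed
qed

lemma isometry_transl: "isometry N L (transl L)"
  unfolding isometry_def op_eq_def op_mult_def op_adj_def transl_def op_id_def
proof (intro ballI)
  fix s t assume s: "s \<in> configs N L" and t: "t \<in> configs N L"
  have "(\<Sum>u\<in>configs N L. cnj (if u = rot L s then 1 else 0) * (if u = rot L t then 1 else 0))
      = (\<Sum>u\<in>configs N L. if u = rot L s then (if rot L s = rot L t then 1 else 0) else 0)"
    by (rule sum.cong) auto
  also have "\<dots> = (if s = t then 1 else 0)"
    using finite_configs[of N L] rot_configs[OF s] rot_inj_on_configs[OF s t] by auto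
  finally show "(\<Sum>u\<in>configs N L. cnj (if u = rot L s then 1 else 0) * (if u = rot L t then 1 else 0))
      = (if s = t then 1 else 0)" .
qed

lemma corr_transl_cov:
  assumes "transl_cov N L F" "transl_cov N L G"
    and eig: "vec_eq N L (op_apply N L (transl L) \<Psi>) (\<lambda>s. \<mu> * \<Psi> s)"
    and norm: "inner N L \<Psi> \<Psi> = 1"
  shows "corr N L \<Psi> (F (x + 1)) (G (y + 1)) = corr N L \<Psi> (F x) (G y)"
proof (rule corr_isometry_conj[OF isometry_transl eig norm])
  show "op_eq N L (F (x + 1)) (op_mult N L (op_mult N L (transl L) (F x)) (op_adj (transl L)))"
    using assms(1) by (simp add: transl_cov_def)
  show "op_eq N L (G (y + 1)) (op_mult N L (op_mult N L (transl L) (G y)) (op_adj (transl L)))"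
    using assms(2) by (simp add: transl_cov_def)
qed


lemma hermitian_op_sum:
  assumes "\<And>x. hermitian N L (f x)"
  shows "hermitian N L (op_sum L f)"
  unfolding hermitian_def op_eq_def
proof (intro ballI)
  fix s t assume "s \<in> configs N L" "t \<in> configs N L"
  then have "f x s t = cnj (f x t s)" for x
    using assms[of x] unfolding hermitian_def op_eq_def op_adj_def by blast
  then show "op_sum L f s t = op_adj (op_sum L f) s t"
    unfolding op_adj_def op_sum_def cnj_sum by presburger
qed

lemma inner_hermitian: "hermitian N L A \<Longrightarrow> inner N L v (op_apply N L A w) = inner N L (op_apply N L A v) w"
  unfolding hermitian_def inner_op_apply_adj
  by (intro inner_vec_eq) (auto simp: vec_eq_def op_apply_op_eq)

lemma inner_hermitian_eigvec:
  assumes A: "hermitian N L A" and eig: "vec_eq N L (op_apply N L A \<Psi>) (\<lambda>s. E * \<Psi> s)"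
    and norm: "inner N L \<Psi> \<Psi> = 1"
  shows "inner N L \<Psi> (op_apply N L A w) = E * inner N L \<Psi> w"
proof -
  have left: "inner N L \<Psi> (op_apply N L A v) = cnj E * inner N L \<Psi> v" for v
    unfolding inner_hermitian[OF A] inner_vec_eq[OF eig vec_eq_refl] by (rule inner_scale_left)
  have "cnj E = E"
    using left[of \<Psi>] norm by (simp add: inner_vec_eq[OF vec_eq_refl eig] inner_scale_right)
  with left show ?thesis by simp
qed


lemma op_apply_continuity:
  assumes "op_eq N L (op_scale \<i> (commutator N L H Q)) (op_diff J0 J1)"
  shows "vec_eq N L (op_apply N L J1 w) (\<lambda>s. op_apply N L J0 w s
     - \<i> * (op_apply N L H (op_apply N L Q w) s - op_apply N L Q (op_apply N L H w) s))"
  using op_apply_op_eq[OF assms]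
  by (simp add: vec_eq_def commutator_def op_apply_op_scale op_apply_op_diff op_apply_op_mult)

lemma corr_continuity_left:
  assumes cont: "op_eq N L (op_scale \<i> (commutator N L H Q)) (op_diff J0 J1)"
    and H: "hermitian N L H" and eig: "vec_eq N L (op_apply N L H \<Psi>) (\<lambda>s. E * \<Psi> s)"
    and norm: "inner N L \<Psi> \<Psi> = 1"
  shows "corr N L \<Psi> J1 B
    = corr N L \<Psi> J0 B - \<i> * (E * corr N L \<Psi> Q B - corr N L \<Psi> Q (op_mult N L H B))"
  unfolding corr_def inner_vec_eq[OF vec_eq_refl op_apply_continuity[OF cont]]
  by (simp add: inner_diff_right inner_scale_right inner_hermitian_eigvec[OF H eig norm]
      op_apply_op_mult)

lemma corr_continuity_right:
  assumes cont: "op_eq N L (op_scale \<i> (commutator N L H Q)) (op_diff J0 J1)"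
    and eig: "vec_eq N L (op_apply N L H \<Psi>) (\<lambda>s. E * \<Psi> s)"
  shows "corr N L \<Psi> A J0
    = corr N L \<Psi> A J1 + \<i> * (corr N L \<Psi> A (op_mult N L H Q) - E * corr N L \<Psi> A Q)"
proof -
  have "vec_eq N L (op_apply N L J0 \<Psi>) (\<lambda>s. op_apply N L J1 \<Psi> s
      + \<i> * (op_apply N L H (op_apply N L Q \<Psi>) s - E * op_apply N L Q \<Psi> s))"
    using op_apply_continuity[OF cont, of \<Psi>]
    by (simp add: vec_eq_def op_apply_vec_eq[OF eig] op_apply_cmult)
  then have "op_apply N L A (op_apply N L J0 \<Psi>) = op_apply N L A (\<lambda>s. op_apply N L J1 \<Psi> s
      + \<i> * (op_apply N L H (op_apply N L Q \<Psi>) s - E * op_apply N L Q \<Psi> s))"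
    by (rule op_apply_vec_eq)
  then show ?thesis
    unfolding corr_def
    by (simp add: op_apply_add op_apply_cmult op_apply_diff inner_add_right inner_scale_right
        inner_diff_right op_apply_op_mult)
qed

theorem mainTheorem1:
  fixes N L :: nat
    and h :: "int \<Rightarrow> cop"
    and q J :: "'a \<Rightarrow> int \<Rightarrow> cop"
    and \<Psi> :: cvec
    and \<alpha> \<beta> :: 'a
  assumes "N \<ge> 1" and "L \<ge> 1"
    and h_loc: "local_cov_family N L h"
    and h_herm: "\<And>x. hermitian N L (h x)"
    and q_loc: "\<And>a. local_cov_family N L (q a)"
    and J_loc: "\<And>a. local_cov_family N L (J a)"
    and QQ: "\<And>a b. op_eq N L (commutator N L (op_sum L (q a)) (op_sum L (q b))) (\<lambda>_ _. 0)"
    and HQ: "\<And>a. op_eq N L (commutator N L (op_sum L h) (op_sum L (q a))) (\<lambda>_ _. 0)"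
    and UQ: "\<And>a. op_eq N L (commutator N L (transl L) (op_sum L (q a))) (\<lambda>_ _. 0)"
    and UH: "op_eq N L (commutator N L (transl L) (op_sum L h)) (\<lambda>_ _. 0)"
    and continuity: "\<And>a x. op_eq N L
        (op_scale \<i> (commutator N L (op_sum L h) (q a x)))
        (op_diff (J a x) (J a (x + 1)))"
    and norm: "inner N L \<Psi> \<Psi> = 1"
    and eigH: "\<exists>E. vec_eq N L (op_apply N L (op_sum L h) \<Psi>) (\<lambda>s. E * \<Psi> s)"
    and eigU: "\<exists>\<mu>. vec_eq N L (op_apply N L (transl L) \<Psi>) (\<lambda>s. \<mu> * \<Psi> s)"
    and "\<alpha> \<noteq> \<beta>"
  shows "\<forall>x::int.
     expval N L \<Psi> (op_diff (op_mult N L (J \<alpha> (x + 1)) (q \<beta> 0)) (op_mult N L (q \<alpha> (x + 1)) (J \<beta> 1)))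
   = expval N L \<Psi> (op_diff (op_mult N L (J \<alpha> x) (q \<beta> 0)) (op_mult N L (q \<alpha> x) (J \<beta> 1)))"
proof
  fix x :: int
  obtain E where E: "vec_eq N L (op_apply N L (op_sum L h) \<Psi>) (\<lambda>s. E * \<Psi> s)"
    using eigH by blast
  obtain \<mu> where \<mu>: "vec_eq N L (op_apply N L (transl L) \<Psi>) (\<lambda>s. \<mu> * \<Psi> s)"
    using eigU by blast
  have left: "corr N L \<Psi> (J \<alpha> (x + 1)) (q \<beta> 0) = corr N L \<Psi> (J \<alpha> x) (q \<beta> 0)
      - \<i> * (E * corr N L \<Psi> (q \<alpha> x) (q \<beta> 0) - corr N L \<Psi> (q \<alpha> x) (op_mult N L (op_sum L h) (q \<beta> 0)))"
    by (rule corr_continuity_left[OF continuity hermitian_op_sum[OF h_herm] E norm])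
  have "transl_cov N L (q \<alpha>)" "transl_cov N L (J \<beta>)"
    using q_loc J_loc by (simp_all add: local_cov_family_def)
  from corr_transl_cov[OF this \<mu> norm]
  have "corr N L \<Psi> (q \<alpha> (x + 1)) (J \<beta> (0 + 1)) = corr N L \<Psi> (q \<alpha> x) (J \<beta> 0)" .
  also have "\<dots> = corr N L \<Psi> (q \<alpha> x) (J \<beta> (0 + 1))
      + \<i> * (corr N L \<Psi> (q \<alpha> x) (op_mult N L (op_sum L h) (q \<beta> 0)) - E * corr N L \<Psi> (q \<alpha> x) (q \<beta> 0))"
    by (rule corr_continuity_right[OF continuity E])
  finally have right: "corr N L \<Psi> (q \<alpha> (x + 1)) (J \<beta> 1) = corr N L \<Psi> (q \<alpha> x) (J \<beta> 1)
      + \<i> * (corr N L \<Psi> (q \<alpha> x) (op_mult N L (op_sum L h) (q \<beta> 0)) - E * corr N L \<Psi> (q \<alpha> x) (q \<beta> 0))"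
    by simp
  show "expval N L \<Psi> (op_diff (op_mult N L (J \<alpha> (x + 1)) (q \<beta> 0)) (op_mult N L (q \<alpha> (x + 1)) (J \<beta> 1)))
   = expval N L \<Psi> (op_diff (op_mult N L (J \<alpha> x) (q \<beta> 0)) (op_mult N L (q \<alpha> x) (J \<beta> 1)))"
    unfolding expval_op_diff_op_mult left right by (simp add: algebra_simps)
qed

end
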